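(* Let $p(x,y)$ be a real polynomial and $A\in\mathbb{N}_0^2$ such that the exponent vectors $k$ of the terms of $p$ take exactly two distinct values $B_1^A<B_2^A$ of $\langle A,k\rangle$, i.e. $p=\varphi_1^A+\varphi_2^A$ where $\varphi_j^A$ is the sum of the terms of $p$ with $\langle A,k\rangle=B_j^A$. Then there is no $\bar A\in\mathbb{N}_0^2$ with $\bar A\neq A$ such that the main $\bar A$-quasi-homogeneous form of $p$ contains more than two terms.
   Context: $\mathbb{N}=\{1,2,\dots\}$; $\mathbb{N}_0^2$ is the set of $(A_1,A_2)\in\mathbb{N}^2$ with $\gcd(A_1,A_2)=1$. The main $\bar A$-quasi-homogeneous form of $p$ is the sum of the terms of $p$ whose exponent vectors $k$ minimize $\langle\bar A,k\rangle$ over the set of exponent vectors of terms of $p$ with nonzero coefficients. *)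

theory Defs
  imports Complex_Main
begin

text \<open>A real polynomial in two variables x, y is represented by its finitely supported
coefficient function: p (k1,k2) is the coefficient of x^k1 y^k2.\<close>

type_synonym bipoly = "nat \<times> nat \<Rightarrow> real"

definition is_bipoly :: "bipoly \<Rightarrow> bool" where
  "is_bipoly p \<longleftrightarrow> finite {k. p k \<noteq> 0}"

definition terms_of :: "bipoly \<Rightarrow> (nat \<times> nat) set" where
  "terms_of p = {k. p k \<noteq> 0}"

definition N02 :: "(nat \<times> nat) set" where
  "N02 = {A. fst A \<ge> 1 \<and> snd A \<ge> 1 \<and> gcd (fst A) (snd A) = 1}"

definition qdeg :: "nat \<times> nat \<Rightarrow> nat \<times> nat \<Rightarrow> nat" where
  "qdeg A k = fst A * fst k + snd A * snd k"

definition main_form :: "nat \<times> nat \<Rightarrow> bipoly \<Rightarrow> bipoly" where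
  "main_form A p = (\<lambda>k. if k \<in> terms_of p \<and> (\<forall>k'\<in>terms_of p. qdeg A k \<le> qdeg A k')
                         then p k else 0)"

end

theory Submission
  imports Defs
begin

text \<open>All terms of the main \<open>Abar\<close>-form have the same \<open>Abar\<close>-degree. If there were more than two of
them, two distinct ones \<open>k \<noteq> l\<close> would also share their \<open>A\<close>-degree, since \<open>p\<close> has only two
\<open>A\<close>-degrees. Then \<open>A\<close> and \<open>Abar\<close> are both orthogonal to \<open>k - l \<noteq> 0\<close>, hence parallel, and two
parallel primitive vectors in \<open>\<nat>\<^sup>2\<close> coincide.\<close>

lemma orthogonal_to_nonzero_imp_cross_eq:
  fixes a1 a2 b1 b2 d1 d2 :: "'a :: idom"
  assumes "a1 * d1 + a2 * d2 = 0" "b1 * d1 + b2 * d2 = 0" "d1 \<noteq> 0 \<or> d2 \<noteq> 0"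
  shows "a1 * b2 = a2 * b1"
proof -
  have "(a1 * b2 - a2 * b1) * d1 = b2 * (a1 * d1 + a2 * d2) - a2 * (b1 * d1 + b2 * d2)"
    "(a1 * b2 - a2 * b1) * d2 = a1 * (b1 * d1 + b2 * d2) - b1 * (a1 * d1 + a2 * d2)"
    by (simp_all add: algebra_simps)
  with assms show ?thesis
    by auto
qed

lemma qdeg_eq_imp_cross_eq:
  assumes "qdeg A k = qdeg A l" "qdeg B k = qdeg B l" "k \<noteq> l"
  shows "fst A * snd B = snd A * fst B"
proof -
  define d1 d2 where "d1 = int (fst k) - int (fst l)" and "d2 = int (snd k) - int (snd l)"
  have "int (fst A) * d1 + int (snd A) * d2 = 0" "int (fst B) * d1 + int (snd B) * d2 = 0"
    using arg_cong[OF assms(1), of int] arg_cong[OF assms(2), of int]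
    by (simp_all add: qdeg_def d1_def d2_def algebra_simps)
  moreover have "d1 \<noteq> 0 \<or> d2 \<noteq> 0"
    using assms(3) by (auto simp: d1_def d2_def prod_eq_iff)
  ultimately have "int (fst A * snd B) = int (snd A * fst B)"
    using orthogonal_to_nonzero_imp_cross_eq by simp
  then show ?thesis
    by linarith
qed

lemma N02_eq_if_qdeg_eq:
  assumes "A \<in> N02" "B \<in> N02" "qdeg A k = qdeg A l" "qdeg B k = qdeg B l" "k \<noteq> l"
  shows "A = B"
proof -
  have "coprime (fst A) (snd A)" "coprime (fst B) (snd B)"
    using assms(1,2) by (simp_all add: N02_def coprime_iff_gcd_eq_1)
  with qdeg_eq_imp_cross_eq[OF assms(3-5)] show ?thesis
    by (simp add: coprime_crossproduct_nat prod_eq_iff mult.commute)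
qed

lemma terms_of_main_form:
  "terms_of (main_form B p) = {k \<in> terms_of p. \<forall>k' \<in> terms_of p. qdeg B k \<le> qdeg B k'}"
  by (auto simp: terms_of_def main_form_def)

lemma qdeg_eq_on_terms_of_main_form:
  assumes "k \<in> terms_of (main_form B p)" "l \<in> terms_of (main_form B p)"
  shows "qdeg B k = qdeg B l"
  using assms by (auto simp: terms_of_main_form intro: order_antisym)

theorem mainTheorem13:
  fixes p :: bipoly and A :: "nat \<times> nat"
  assumes "is_bipoly p"
    and "A \<in> N02"
    and "card (qdeg A ` terms_of p) = 2"
  shows "\<not> (\<exists>Abar \<in> N02. Abar \<noteq> A \<and> card (terms_of (main_form Abar p)) > 2)"
proof
  assume "\<exists>Abar \<in> N02. Abar \<noteq> A \<and> card (terms_of (main_form Abar p)) > 2"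
  then obtain Abar where Abar: "Abar \<in> N02" "Abar \<noteq> A"
    and many: "card (terms_of (main_form Abar p)) > 2" by blast
  let ?S = "terms_of (main_form Abar p)"
  have "?S \<subseteq> terms_of p"
    by (auto simp: terms_of_main_form)
  moreover have "finite (terms_of p)"
    using assms(1) by (simp add: is_bipoly_def terms_of_def)
  ultimately have "card (qdeg A ` ?S) \<le> card (qdeg A ` terms_of p)"
    by (intro card_mono image_mono) simp_all
  with many assms(3) have "\<not> inj_on (qdeg A) ?S"
    by (intro pigeonhole) simp
  then obtain k l where kl: "k \<in> ?S" "l \<in> ?S" "k \<noteq> l" "qdeg A k = qdeg A l"
    unfolding inj_on_def by blast
  with N02_eq_if_qdeg_eq[OF assms(2) Abar(1)] qdeg_eq_on_terms_of_main_form Abar(2)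
  show False by metis
qed

end
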